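(* Let $X$ and $\varepsilon$ be independent real random variables and $Y=X+\varepsilon$. Suppose $P(X\in\{\xi_\ell\}_{\ell\in\mathbb{N}_0})=1$ for real numbers $\xi_0<\xi_1<\cdots$, $F_X\{\xi_0\}>0$, and there is $z_0\in\mathbb{R}$ with $F_\varepsilon(z_0)=0$. Choose $\{\zeta_\ell\}_{\ell\in\mathbb{N}_0}\subset\mathbb{R}$ with $\xi_\ell<\zeta_\ell\le\xi_{\ell+1}$ and $F_\varepsilon(z_0+\zeta_\ell-\xi_\ell)>0$ for each $\ell\in\mathbb{N}_0$. Define $p_X(\ell):=F_X\{\xi_\ell\}\mathbf 1_{\mathbb{N}_0}(\ell)$, $$\ddot P_{\varepsilon,+}(\ell,z):=\Big(\delta_{z,0}-\frac{F_\varepsilon(z_0+\zeta_\ell-\xi_{\ell-z})}{F_\varepsilon(z_0+\zeta_\ell-\xi_\ell)}\mathbf 1_{\{0,\dots,\ell\}}(z)\Big)\mathbf 1_{\mathbb{N}_0}(\ell),\qquad \ddot P_Y(\ell):=\frac{F_Y(z_0+\zeta_\ell)}{F_\varepsilon(z_0+\zeta_\ell-\xi_\ell)}\mathbf 1_{\mathbb{N}_0}(\ell).$$ Then $p_X(\ell)=\sum_{z\in\mathbb{Z}}\ddot P_Y(\ell-z)\,\beta\{\ddot P_{\varepsilon,+}\}(\ell,z)$ for all $\ell\in\mathbb{Z}$. In particular, if there exist $s>0$ and $0<\sigma\le s$ with $\xi_\ell=\xi_0+s\ell$ for all $\ell\in\mathbb{N}_0$ and $F_\varepsilon(z_0+\sigma)>0$,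 then, taking $\zeta_\ell:=\xi_0+\sigma+s\ell$ and $\ddot U_{\varepsilon,+}(z):=\ddot P_{\varepsilon,+}(z,z)$, $$F_X(\xi)=(\Theta\{\ddot P_Y\}*\Theta\{\gamma\{\ddot U_{\varepsilon,+}\}\})\Big(\frac{\xi-\xi_0}{s}\Big)\qquad(\xi\in\mathbb{R}).$$
   Context: $F_B$ is the distribution function of $B$, $F_B\{x\}:=P(B=x)$. $\delta_{z,0}=1$ if $z=0$, else $0$. For a double sequence $\ddot p(\ell,z)$ vanishing for $z<0$: $\ddot p^{*0}(\ell,z):=\delta_{z,0}$, $\ddot p^{*j}(\ell,z):=\sum_{z_1\in\mathbb{Z}}\ddot p(\ell,z_1)\ddot p^{*(j-1)}(\ell-z_1,z-z_1)$, and $\beta\{\ddot p\}(\ell,z):=\sum_{j=0}^{z}\ddot p^{*j}(\ell,z)$ (empty sum $=0$). For a single sequence $\ddot u$ vanishing on negative integers: $\ddot u^{*0}(z):=\delta_{z,0}$, $\ddot u^{*j}(z):=\sum_y\ddot u(z-y)\ddot u^{*(j-1)}(y)$, $\gamma\{\ddot u\}(z):=\sum_{j=0}^z\ddot u^{*j}(z)$. For a sequence $p$ vanishing on negative integers, $\Theta\{p\}(\xi):=\sum_{z=-\infty}^{\lfloor\xi\rfloor}p(z)$, and $(\Theta\{p\}*\Theta\{q\})(x):=\sum_{z\in\mathbb{Z}}\Theta\{p\}(x-z)q(z)$. *)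

theory Defs
  imports "HOL-Probability.Probability"
begin

definition distfun :: "'a measure \<Rightarrow> ('a \<Rightarrow> real) \<Rightarrow> real \<Rightarrow> real" where
  "distfun M B x = cdf (distr M borel B) x"

definition distatom :: "'a measure \<Rightarrow> ('a \<Rightarrow> real) \<Rightarrow> real \<Rightarrow> real" where
  "distatom M B x = measure (distr M borel B) {x}"

definition kdelta :: "int \<Rightarrow> real" where
  "kdelta z = (if z = 0 then 1 else 0)"

fun dconv_pow :: "(int \<Rightarrow> int \<Rightarrow> real) \<Rightarrow> nat \<Rightarrow> int \<Rightarrow> int \<Rightarrow> real" where
  "dconv_pow p 0 l z = kdelta z"
| "dconv_pow p (Suc j) l z =
     (\<Sum>\<^sub>\<infinity> z1 \<in> (UNIV::int set). p l z1 * dconv_pow p j (l - z1) (z - z1))"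

definition dbeta :: "(int \<Rightarrow> int \<Rightarrow> real) \<Rightarrow> int \<Rightarrow> int \<Rightarrow> real" where
  "dbeta p l z = (\<Sum>j\<in>{0..z}. dconv_pow p (nat j) l z)"

fun sconv_pow :: "(int \<Rightarrow> real) \<Rightarrow> nat \<Rightarrow> int \<Rightarrow> real" where
  "sconv_pow u 0 z = kdelta z"
| "sconv_pow u (Suc j) z = (\<Sum>\<^sub>\<infinity> y \<in> (UNIV::int set). u (z - y) * sconv_pow u j y)"

definition sgamma :: "(int \<Rightarrow> real) \<Rightarrow> int \<Rightarrow> real" where
  "sgamma u z = (\<Sum>j\<in>{0..z}. sconv_pow u (nat j) z)"

definition Theta :: "(int \<Rightarrow> real) \<Rightarrow> real \<Rightarrow> real" where
  "Theta p x = (\<Sum>\<^sub>\<infinity> z \<in> {..\<lfloor>x\<rfloor>}. p z)"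

definition Theta_conv :: "(int \<Rightarrow> real) \<Rightarrow> (int \<Rightarrow> real) \<Rightarrow> real \<Rightarrow> real" where
  "Theta_conv p q x = (\<Sum>\<^sub>\<infinity> z \<in> (UNIV::int set). Theta p (x - of_int z) * q z)"

definition Peps_plus :: "(real \<Rightarrow> real) \<Rightarrow> (nat \<Rightarrow> real) \<Rightarrow> (nat \<Rightarrow> real) \<Rightarrow> real \<Rightarrow> int \<Rightarrow> int \<Rightarrow> real" where
  "Peps_plus Fe \<xi> \<zeta> z0 l z =
     (if 0 \<le> l then
        kdelta z - (if 0 \<le> z \<and> z \<le> l then
           Fe (z0 + \<zeta> (nat l) - \<xi> (nat (l - z))) / Fe (z0 + \<zeta> (nat l) - \<xi> (nat l)) else 0)
      else 0)"

definition PY :: "(real \<Rightarrow> real) \<Rightarrow> (real \<Rightarrow> real) \<Rightarrow> (nat \<Rightarrow> real) \<Rightarrow> (nat \<Rightarrow> real) \<Rightarrow> real \<Rightarrow> int \<Rightarrow> real" where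
  "PY FY Fe \<xi> \<zeta> z0 l =
     (if 0 \<le> l then FY (z0 + \<zeta> (nat l)) / Fe (z0 + \<zeta> (nat l) - \<xi> (nat l)) else 0)"

end

theory Submission
  imports Defs
begin

(* Conditioning on the atom of X that Y = X + \<epsilon> comes from, independence gives
   F_Y(z0 + \<zeta>_l) = sum_{k <= l} F_X{\<xi>_k} F_\<epsilon>(z0 + \<zeta>_l - \<xi>_k); the terms with k > l vanish
   because \<zeta>_l <= \<xi>_{l+1} puts their argument at or below z0.  Dividing by the coefficient
   of F_X{\<xi>_l} yields the triangular renewal equation
   p_X(l) = P_Y(l) + sum_{z=1..l} P_{\<epsilon>,+}(l,z) p_X(l - z),
   which is solved by the series beta of iterated kernels.  On an equally spaced lattice the
   kernel P_{\<epsilon>,+}(l,z) does not depend on l, so beta reduces to gamma, and summing the atoms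
   below \<xi> gives the Theta-convolution. *)

lemma (in prob_space) prob_indep_var_conj:
  assumes "indep_var S X T Y" "A \<in> sets S" "B \<in> sets T"
  shows "\<P>(\<omega> in M. X \<omega> \<in> A \<and> Y \<omega> \<in> B) = \<P>(\<omega> in M. X \<omega> \<in> A) * \<P>(\<omega> in M. Y \<omega> \<in> B)"
proof -
  have "indep_set (sigma_sets (space M) {X -` A \<inter> space M | A. A \<in> sets S})
      (sigma_sets (space M) {Y -` A \<inter> space M | A. A \<in> sets T})"
    using assms(1) indep_var_eq by blast
  moreover have "X -` A \<inter> space M \<in> sigma_sets (space M) {X -` A \<inter> space M | A. A \<in> sets S}"
    using assms(2) by (intro sigma_sets.Basic) blast
  moreover have "Y -` B \<inter> space M \<in> sigma_sets (space M) {Y -` A \<inter> space M | A. A \<in> sets T}"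
    using assms(3) by (intro sigma_sets.Basic) blast
  ultimately have "prob ((X -` A \<inter> space M) \<inter> (Y -` B \<inter> space M)) =
      prob (X -` A \<inter> space M) * prob (Y -` B \<inter> space M)"
    unfolding indep_sets2_eq by blast
  moreover have "{\<omega> \<in> space M. X \<omega> \<in> A \<and> Y \<omega> \<in> B} = (X -` A \<inter> space M) \<inter> (Y -` B \<inter> space M)"
    by auto
  ultimately show ?thesis
    by (simp add: vimage_def Int_def conj_commute)
qed

lemma distfun_eq_measure:
  "B \<in> borel_measurable M \<Longrightarrow> distfun M B x = measure M {\<omega> \<in> space M. B \<omega> \<le> x}"
  unfolding distfun_def cdf_def
  by (subst measure_distr) (auto intro!: arg_cong[where f="measure M"])

lemma distatom_eq_measure:
  "B \<in> borel_measurable M \<Longrightarrow> distatom M B x = measure M {\<omega> \<in> space M. B \<omega> = x}"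
  unfolding distatom_def
  by (subst measure_distr) (auto intro!: arg_cong[where f="measure M"])

lemma infsum_eq_sum_finite_support:
  fixes f :: "'a \<Rightarrow> 'b::{comm_monoid_add,t2_space}"
  assumes "finite S" "\<And>x. x \<notin> S \<Longrightarrow> f x = 0"
  shows "infsum f UNIV = sum f S"
proof -
  have "infsum f UNIV = infsum f S"
    by (rule infsum_cong_neutral) (use assms in auto)
  then show ?thesis
    using assms by simp
qed

lemma sum_int_atLeastAtMost_shift:
  fixes f :: "int \<Rightarrow> 'a::comm_monoid_add"
  shows "(\<Sum>z\<in>{a..b}. f (z - c)) = (\<Sum>w\<in>{a - c..b - c}. f w)"
  by (rule sum.reindex_bij_witness[of _ "\<lambda>w. w + c" "\<lambda>z. z - c"]) auto

lemma dbeta_eq_0_neg: "z < 0 \<Longrightarrow> dbeta P l z = 0"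
  unfolding dbeta_def by simp

lemma sgamma_eq_0_neg: "z < 0 \<Longrightarrow> sgamma u z = 0"
  unfolding sgamma_def by simp

lemma sconv_pow_eq_0:
  assumes u: "\<And>z. z \<le> 0 \<Longrightarrow> u z = 0" and "z < int j"
  shows "sconv_pow u j z = 0"
  using assms(2)
proof (induction j arbitrary: z)
  case 0
  then show ?case
    by (simp add: kdelta_def)
next
  case (Suc j)
  have "u (z - y) * sconv_pow u j y = 0" for y
    using Suc u by (cases "y < int j") auto
  then show ?case
    by (simp add: infsum_0)
qed

lemma sconv_pow_Suc_eq_sum:
  assumes u: "\<And>z. z \<le> 0 \<Longrightarrow> u z = 0"
  shows "sconv_pow u (Suc j) z = (\<Sum>z1\<in>{1..z}. u z1 * sconv_pow u j (z - z1))"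
proof -
  have "sconv_pow u (Suc j) z = (\<Sum>y\<in>{0..z - 1}. u (z - y) * sconv_pow u j y)"
    by (simp, rule infsum_eq_sum_finite_support) (auto simp: u sconv_pow_eq_0[OF u])
  also have "\<dots> = (\<Sum>z1\<in>{1..z}. u z1 * sconv_pow u j (z - z1))"
    by (rule sum.reindex_bij_witness[of _ "\<lambda>z1. z - z1" "\<lambda>y. z - y"]) auto
  finally show ?thesis .
qed

lemma Theta_eq_sum:
  assumes "\<And>z. z < 0 \<Longrightarrow> p z = 0"
  shows "Theta p x = (\<Sum>z\<in>{0..\<lfloor>x\<rfloor>}. p z)"
proof -
  have "Theta p x = infsum p {0..\<lfloor>x\<rfloor>}"
    unfolding Theta_def by (rule infsum_cong_neutral) (auto simp: assms)
  then show ?thesis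
    by simp
qed

lemma Theta_conv_eq_sum:
  assumes p: "\<And>z. z < 0 \<Longrightarrow> p z = 0" and q: "\<And>z. z < 0 \<Longrightarrow> q z = 0"
  shows "Theta_conv p q x = (\<Sum>k\<in>{0..\<lfloor>x\<rfloor>}. \<Sum>z\<in>{0..k}. p (k - z) * q z)"
proof -
  define n where "n = \<lfloor>x\<rfloor>"
  have "Theta_conv p q x = (\<Sum>z\<in>{0..n}. (\<Sum>w\<in>{0..n - z}. p w) * q z)"
    unfolding Theta_conv_def n_def
    by (simp only: Theta_eq_sum[OF p] floor_diff_of_int, rule infsum_eq_sum_finite_support)
       (auto simp: q)
  also have "\<dots> = (\<Sum>z\<in>{0..n}. \<Sum>k\<in>{0..n}. p (k - z) * q z)"
  proof (rule sum.cong[OF refl])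
    fix z
    assume z: "z \<in> {0..n}"
    have "(\<Sum>k\<in>{0..n}. p (k - z)) = (\<Sum>w\<in>{0 - z..n - z}. p w)"
      by (rule sum_int_atLeastAtMost_shift)
    also have "\<dots> = (\<Sum>w\<in>{0..n - z}. p w)"
      by (rule sum.mono_neutral_right) (use z in \<open>auto simp: p\<close>)
    finally show "(\<Sum>w\<in>{0..n - z}. p w) * q z = (\<Sum>k\<in>{0..n}. p (k - z) * q z)"
      by (metis sum_distrib_right)
  qed
  also have "\<dots> = (\<Sum>k\<in>{0..n}. \<Sum>z\<in>{0..k}. p (k - z) * q z)"
    by (subst sum.swap, rule sum.cong[OF refl], rule sum.mono_neutral_right) (auto simp: p)
  finally show ?thesis
    unfolding n_def .
qed

locale renewal_kernel =
  fixes P :: "int \<Rightarrow> int \<Rightarrow> real"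
  assumes support: "P l z \<noteq> 0 \<Longrightarrow> 1 \<le> z \<and> z \<le> l"
begin

lemma dconv_pow_Suc_eq_sum:
  "dconv_pow P (Suc j) l z = (\<Sum>z1\<in>{1..l}. P l z1 * dconv_pow P j (l - z1) (z - z1))"
  by (simp, rule infsum_eq_sum_finite_support) (use support in auto)

lemma dconv_pow_eq_0: "z < int j \<Longrightarrow> dconv_pow P j l z = 0"
proof (induction j arbitrary: l z)
  case 0
  then show ?case
    by (simp add: kdelta_def)
next
  case (Suc j)
  then show ?case
    unfolding dconv_pow_Suc_eq_sum by (intro sum.neutral) auto
qed

lemma dbeta_eq_sum_lessThan:
  assumes "z < int N"
  shows "dbeta P l z = (\<Sum>j<N. dconv_pow P j l z)"
proof (cases "z < 0")
  case True
  then show ?thesis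
    by (simp add: dbeta_eq_0_neg dconv_pow_eq_0)
next
  case False
  have "{0..z} = int ` {..nat z}"
    using False by (auto simp: image_iff intro!: bexI[where x="nat _"])
  then have "dbeta P l z = (\<Sum>j\<le>nat z. dconv_pow P j l z)"
    unfolding dbeta_def by (simp add: sum.reindex)
  also have "\<dots> = (\<Sum>j<N. dconv_pow P j l z)"
    by (rule sum.mono_neutral_left) (use assms False in \<open>auto intro!: dconv_pow_eq_0\<close>)
  finally show ?thesis .
qed

lemma dbeta_renewal:
  "dbeta P l z = kdelta z + (\<Sum>z1\<in>{1..l}. P l z1 * dbeta P (l - z1) (z - z1))"
proof -
  define N where "N = nat z + 1"
  have z: "z < int N"
    unfolding N_def by linarith
  have "dbeta P l z = (\<Sum>j<Suc N. dconv_pow P j l z)"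
    by (rule dbeta_eq_sum_lessThan) (use z in auto)
  also have "\<dots> = kdelta z + (\<Sum>j<N. \<Sum>z1\<in>{1..l}. P l z1 * dconv_pow P j (l - z1) (z - z1))"
    by (simp only: sum.lessThan_Suc_shift dconv_pow.simps(1) dconv_pow_Suc_eq_sum)
  also have "\<dots> = kdelta z + (\<Sum>z1\<in>{1..l}. P l z1 * (\<Sum>j<N. dconv_pow P j (l - z1) (z - z1)))"
    by (simp add: sum.swap[of _ "{..<N}"] sum_distrib_left)
  also have "\<dots> = kdelta z + (\<Sum>z1\<in>{1..l}. P l z1 * dbeta P (l - z1) (z - z1))"
  proof -
    have "dbeta P (l - z1) (z - z1) = (\<Sum>j<N. dconv_pow P j (l - z1) (z - z1))" if "1 \<le> z1" for z1
      using that z by (intro dbeta_eq_sum_lessThan) simp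
    then show ?thesis
      by simp
  qed
  finally show ?thesis .
qed

lemma renewal_sum_dbeta:
  assumes "0 \<le> l"
  shows "(\<Sum>z\<in>{0..l}. g (l - z) * dbeta P l z) =
    g l + (\<Sum>z1\<in>{1..l}. P l z1 * (\<Sum>w\<in>{0..l - z1}. g (l - z1 - w) * dbeta P (l - z1) w))"
proof -
  have shift: "(\<Sum>z\<in>{0..l}. g (l - z) * dbeta P (l - z1) (z - z1)) =
      (\<Sum>w\<in>{0..l - z1}. g (l - z1 - w) * dbeta P (l - z1) w)" if "1 \<le> z1" for z1
  proof -
    have "(\<Sum>z\<in>{0..l}. g (l - z) * dbeta P (l - z1) (z - z1)) =
        (\<Sum>w\<in>{0 - z1..l - z1}. g (l - z1 - w) * dbeta P (l - z1) w)"
      by (subst sum_int_atLeastAtMost_shift[symmetric]) (simp add: algebra_simps)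
    also have "\<dots> = (\<Sum>w\<in>{0..l - z1}. g (l - z1 - w) * dbeta P (l - z1) w)"
      by (rule sum.mono_neutral_right) (use that in \<open>auto simp: dbeta_eq_0_neg\<close>)
    finally show ?thesis .
  qed
  have "(\<Sum>z\<in>{0..l}. g (l - z) * dbeta P l z) =
      (\<Sum>z\<in>{0..l}. g (l - z) * kdelta z) +
      (\<Sum>z1\<in>{1..l}. P l z1 * (\<Sum>z\<in>{0..l}. g (l - z) * dbeta P (l - z1) (z - z1)))"
    by (subst dbeta_renewal)
       (simp add: distrib_left sum.distrib sum_distrib_left sum.swap[of _ "{0..l}"] mult_ac)
  also have "(\<Sum>z\<in>{0..l}. g (l - z) * kdelta z) = (\<Sum>z\<in>{0..l}. if z = 0 then g l else 0)"
    by (rule sum.cong) (auto simp: kdelta_def)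
  also have "\<dots> = g l"
    using assms by simp
  finally show ?thesis
    by (simp add: shift)
qed

lemma renewal_equation_solution:
  fixes q g :: "int \<Rightarrow> real"
  assumes q_neg: "\<And>l. l < 0 \<Longrightarrow> q l = 0"
    and renewal: "\<And>l. 0 \<le> l \<Longrightarrow> q l = g l + (\<Sum>z1\<in>{1..l}. P l z1 * q (l - z1))"
  shows "q l = (\<Sum>z\<in>{0..l}. g (l - z) * dbeta P l z)"
proof (induction l rule: measure_induct_rule[where f="\<lambda>l. nat (l + 1)"])
  case (less l)
  show ?case
  proof (cases "l < 0")
    case True
    then show ?thesis
      using q_neg by simp
  next
    case False
    have "q l = g l + (\<Sum>z1\<in>{1..l}. P l z1 * q (l - z1))"
      using False renewal by simp
    also have "\<dots> = g l + (\<Sum>z1\<in>{1..l}. P l z1 *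
        (\<Sum>w\<in>{0..l - z1}. g (l - z1 - w) * dbeta P (l - z1) w))"
      using less by simp
    also have "\<dots> = (\<Sum>z\<in>{0..l}. g (l - z) * dbeta P l z)"
      using False by (simp add: renewal_sum_dbeta)
    finally show ?thesis .
  qed
qed

lemma renewal_equation_solution_infsum:
  fixes q g :: "int \<Rightarrow> real"
  assumes "\<And>l. l < 0 \<Longrightarrow> q l = 0" and g_neg: "\<And>l. l < 0 \<Longrightarrow> g l = 0"
    and "\<And>l. 0 \<le> l \<Longrightarrow> q l = g l + (\<Sum>z1\<in>{1..l}. P l z1 * q (l - z1))"
  shows "q l = (\<Sum>\<^sub>\<infinity>z\<in>(UNIV::int set). g (l - z) * dbeta P l z)"
proof -
  have "q l = (\<Sum>z\<in>{0..l}. g (l - z) * dbeta P l z)"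
    by (rule renewal_equation_solution) (use assms in auto)
  also have "\<dots> = (\<Sum>\<^sub>\<infinity>z\<in>(UNIV::int set). g (l - z) * dbeta P l z)"
    by (rule infsum_eq_sum_finite_support[symmetric]) (auto simp: dbeta_eq_0_neg g_neg)
  finally show ?thesis .
qed

lemma dconv_pow_eq_sconv_pow:
  assumes P: "\<And>l z. 0 \<le> z \<Longrightarrow> z \<le> l \<Longrightarrow> P l z = u z" and u: "\<And>z. z \<le> 0 \<Longrightarrow> u z = 0"
    and "z \<le> l"
  shows "dconv_pow P j l z = sconv_pow u j z"
  using assms(3)
proof (induction j arbitrary: l z)
  case 0
  then show ?case
    by simp
next
  case (Suc j)
  have "dconv_pow P (Suc j) l z = (\<Sum>z1\<in>{1..z}. P l z1 * dconv_pow P j (l - z1) (z - z1))"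
    unfolding dconv_pow_Suc_eq_sum
    by (rule sum.mono_neutral_right) (use Suc.prems in \<open>auto simp: dconv_pow_eq_0\<close>)
  also have "\<dots> = (\<Sum>z1\<in>{1..z}. u z1 * sconv_pow u j (z - z1))"
    by (rule sum.cong[OF refl]) (use Suc P in auto)
  finally show ?case
    by (simp only: sconv_pow_Suc_eq_sum[OF u])
qed

lemma dbeta_eq_sgamma:
  assumes "\<And>l z. 0 \<le> z \<Longrightarrow> z \<le> l \<Longrightarrow> P l z = u z" and "\<And>z. z \<le> 0 \<Longrightarrow> u z = 0"
    and "z \<le> l"
  shows "dbeta P l z = sgamma u z"
  unfolding dbeta_def sgamma_def
  by (rule sum.cong[OF refl]) (use assms in \<open>auto intro: dconv_pow_eq_sconv_pow\<close>)

end

lemma renewal_kernel_Peps_plus: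
  assumes "\<And>l. Fe (z0 + \<zeta> l - \<xi> l) \<noteq> 0"
  shows "renewal_kernel (Peps_plus Fe \<xi> \<zeta> z0)"
proof
  fix l z
  assume "Peps_plus Fe \<xi> \<zeta> z0 l z \<noteq> 0"
  then show "1 \<le> z \<and> z \<le> l"
    using assms[of "nat l"] by (cases "z = 0") (auto simp: Peps_plus_def kdelta_def split: if_splits)
qed

lemma Peps_plus_lattice:
  fixes s \<sigma> :: real
  assumes lattice: "\<And>l. \<xi> l = \<xi> 0 + s * real l" and "0 \<le> z" "z \<le> l"
  defines "\<zeta> \<equiv> \<lambda>l. \<xi> 0 + \<sigma> + s * real l"
  shows "Peps_plus Fe \<xi> \<zeta> z0 l z = Peps_plus Fe \<xi> \<zeta> z0 z z"
proof -
  have offset: "z0 + \<zeta> (nat k) - \<xi> (nat (k - y)) = z0 + \<sigma> + s * of_int y"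
    if "0 \<le> y" "y \<le> k" for y k
    unfolding \<zeta>_def using that lattice[of "nat k"] lattice[of "nat (k - y)"]
    by (simp add: algebra_simps)
  show ?thesis
    using assms(2,3) offset[of z l] offset[of z z] offset[of 0 l] offset[of 0 z]
    unfolding Peps_plus_def add_diff_eq[symmetric] by simp
qed

locale discrete_signal_plus_noise = prob_space M for M :: "'a measure" +
  fixes X \<epsilon> :: "'a \<Rightarrow> real" and \<xi> :: "nat \<Rightarrow> real" and z0 :: real
  assumes X_borel [measurable]: "X \<in> borel_measurable M"
    and \<epsilon>_borel [measurable]: "\<epsilon> \<in> borel_measurable M"
    and indep_X_\<epsilon>: "indep_var borel X borel \<epsilon>"
    and strict_mono_\<xi>: "strict_mono \<xi>"
    and X_in_range_\<xi>: "prob {\<omega> \<in> space M. X \<omega> \<in> range \<xi>} = 1"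
    and distfun_\<epsilon>_z0: "distfun M \<epsilon> z0 = 0"
begin

abbreviation F\<^sub>\<epsilon> :: "real \<Rightarrow> real" where
  "F\<^sub>\<epsilon> \<equiv> distfun M \<epsilon>"

abbreviation F\<^sub>Y :: "real \<Rightarrow> real" where
  "F\<^sub>Y \<equiv> distfun M (\<lambda>\<omega>. X \<omega> + \<epsilon> \<omega>)"

abbreviation p\<^sub>X :: "int \<Rightarrow> real" where
  "p\<^sub>X l \<equiv> if 0 \<le> l then distatom M X (\<xi> (nat l)) else 0"

lemma AE_X_in_range_\<xi>: "AE \<omega> in M. X \<omega> \<in> range \<xi>"
  using AE_prob_1[OF X_in_range_\<xi>] by simp

lemma AE_\<epsilon>_greater_z0: "AE \<omega> in M. z0 < \<epsilon> \<omega>"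
proof -
  have "\<P>(\<omega> in M. \<epsilon> \<omega> \<le> z0) = 0"
    using distfun_\<epsilon>_z0 distfun_eq_measure[OF \<epsilon>_borel] by simp
  then show ?thesis
    by (subst (asm) prob_Collect_eq_0) auto
qed

lemma distfun_X_eq_sum:
  assumes "finite {k. \<xi> k \<le> x}"
  shows "distfun M X x = (\<Sum>k | \<xi> k \<le> x. distatom M X (\<xi> k))"
  unfolding distfun_eq_measure[OF X_borel] distatom_eq_measure[OF X_borel]
  by (rule prob_sum)
     (use assms AE_X_in_range_\<xi> in \<open>auto simp: strict_mono_eq[OF strict_mono_\<xi>]\<close>)

lemma distfun_Y_eq_sum:
  assumes "t \<le> z0 + \<xi> (Suc L)"
  shows "F\<^sub>Y t = (\<Sum>k\<le>L. distatom M X (\<xi> k) * F\<^sub>\<epsilon> (t - \<xi> k))"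
proof -
  have "\<P>(\<omega> in M. X \<omega> + \<epsilon> \<omega> \<le> t) = (\<Sum>k\<le>L. \<P>(\<omega> in M. X \<omega> = \<xi> k \<and> \<epsilon> \<omega> \<le> t - \<xi> k))"
  proof (rule prob_sum)
    have k_le: "k \<le> L" if "X \<omega> + \<epsilon> \<omega> \<le> t" "X \<omega> = \<xi> k" "z0 < \<epsilon> \<omega>" for \<omega> k
    proof (rule ccontr)
      assume "\<not> k \<le> L"
      then have "\<xi> (Suc L) \<le> \<xi> k"
        using strict_mono_less_eq[OF strict_mono_\<xi>] by simp
      then show False
        using that assms by linarith
    qed
    show "AE \<omega> in M. (\<forall>k\<in>{..L}. X \<omega> = \<xi> k \<and> \<epsilon> \<omega> \<le> t - \<xi> k \<longrightarrow> X \<omega> + \<epsilon> \<omega> \<le> t) \<and>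
        (X \<omega> + \<epsilon> \<omega> \<le> t \<longrightarrow> (\<exists>!k. k \<in> {..L} \<and> X \<omega> = \<xi> k \<and> \<epsilon> \<omega> \<le> t - \<xi> k))"
      using AE_X_in_range_\<xi> AE_\<epsilon>_greater_z0
      by eventually_elim (auto simp: strict_mono_eq[OF strict_mono_\<xi>] dest: k_le)
  qed auto
  also have "\<dots> = (\<Sum>k\<le>L. \<P>(\<omega> in M. X \<omega> = \<xi> k) * \<P>(\<omega> in M. \<epsilon> \<omega> \<le> t - \<xi> k))"
    using prob_indep_var_conj[OF indep_X_\<epsilon>, of "{\<xi> _}" "{.. t - \<xi> _}"] by simp
  finally show ?thesis
    by (simp add: distfun_eq_measure distatom_eq_measure)
qed

lemma distatom_renewal_equation:
  assumes \<zeta>_le: "\<And>l. \<zeta> l \<le> \<xi> (Suc l)" and pos: "\<And>l. F\<^sub>\<epsilon> (z0 + \<zeta> l - \<xi> l) > 0"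
    and "0 \<le> l"
  shows "p\<^sub>X l = PY F\<^sub>Y F\<^sub>\<epsilon> \<xi> \<zeta> z0 l + (\<Sum>z\<in>{1..l}. Peps_plus F\<^sub>\<epsilon> \<xi> \<zeta> z0 l z * p\<^sub>X (l - z))"
proof -
  define L where "L = nat l"
  define t where "t = z0 + \<zeta> L"
  define d where "d = F\<^sub>\<epsilon> (t - \<xi> L)"
  have "d > 0"
    unfolding d_def t_def using pos by simp
  have t_le: "t \<le> z0 + \<xi> (Suc L)"
    unfolding t_def using \<zeta>_le by simp
  have "F\<^sub>Y t = (\<Sum>k<L. distatom M X (\<xi> k) * F\<^sub>\<epsilon> (t - \<xi> k)) + distatom M X (\<xi> L) * d"
    unfolding distfun_Y_eq_sum[OF t_le] d_def
    by (simp add: lessThan_Suc_atMost[symmetric])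
  then have PY_eq: "PY F\<^sub>Y F\<^sub>\<epsilon> \<xi> \<zeta> z0 l = (\<Sum>k<L. distatom M X (\<xi> k) * F\<^sub>\<epsilon> (t - \<xi> k)) / d + p\<^sub>X l"
    unfolding PY_def using \<open>0 \<le> l\<close> \<open>d > 0\<close>
    by (simp add: L_def[symmetric] t_def[symmetric] d_def[symmetric] field_simps)
  have "(\<Sum>z\<in>{1..l}. Peps_plus F\<^sub>\<epsilon> \<xi> \<zeta> z0 l z * p\<^sub>X (l - z)) =
      (\<Sum>k<L. - (distatom M X (\<xi> k) * F\<^sub>\<epsilon> (t - \<xi> k) / d))"
  proof (rule sum.reindex_bij_witness[of _ "\<lambda>k. l - int k" "\<lambda>z. nat (l - z)"])
    fix z
    assume z: "z \<in> {1..l}"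
    then have "Peps_plus F\<^sub>\<epsilon> \<xi> \<zeta> z0 l z = - (F\<^sub>\<epsilon> (t - \<xi> (nat (l - z))) / d)"
      unfolding Peps_plus_def kdelta_def d_def t_def L_def by auto
    with z show "- (distatom M X (\<xi> (nat (l - z))) * F\<^sub>\<epsilon> (t - \<xi> (nat (l - z))) / d) =
        Peps_plus F\<^sub>\<epsilon> \<xi> \<zeta> z0 l z * p\<^sub>X (l - z)"
      by simp
  qed (auto simp: L_def)
  then show ?thesis
    using PY_eq \<open>0 \<le> l\<close> by (simp add: sum_negf sum_divide_distrib L_def)
qed

lemma distatom_eq_infsum_PY_dbeta:
  assumes "\<And>l. \<zeta> l \<le> \<xi> (Suc l)" and pos: "\<And>l. F\<^sub>\<epsilon> (z0 + \<zeta> l - \<xi> l) > 0"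
  shows "p\<^sub>X l =
    (\<Sum>\<^sub>\<infinity>z\<in>(UNIV::int set). PY F\<^sub>Y F\<^sub>\<epsilon> \<xi> \<zeta> z0 (l - z) * dbeta (Peps_plus F\<^sub>\<epsilon> \<xi> \<zeta> z0) l z)"
proof -
  interpret renewal_kernel "Peps_plus F\<^sub>\<epsilon> \<xi> \<zeta> z0"
    using pos by (intro renewal_kernel_Peps_plus) (metis less_irrefl)
  show ?thesis
  proof (rule renewal_equation_solution_infsum[where q="\<lambda>l. p\<^sub>X l" and g="PY F\<^sub>Y F\<^sub>\<epsilon> \<xi> \<zeta> z0"])
    show "PY F\<^sub>Y F\<^sub>\<epsilon> \<xi> \<zeta> z0 l = 0" if "l < 0" for l
      using that by (simp add: PY_def)
  qed (use distatom_renewal_equation[OF assms] in auto)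
qed

lemma distfun_X_lattice_eq_sum:
  assumes "0 < s" and lattice: "\<And>l. \<xi> l = \<xi> 0 + s * real l"
  shows "distfun M X x = (\<Sum>k\<in>{0..\<lfloor>(x - \<xi> 0) / s\<rfloor>}. p\<^sub>X k)"
proof -
  define n where "n = \<lfloor>(x - \<xi> 0) / s\<rfloor>"
  have "\<xi> k \<le> x \<longleftrightarrow> real k \<le> (x - \<xi> 0) / s" for k
    using \<open>0 < s\<close> lattice[of k] by (simp add: field_simps)
  then have atoms_below: "{k. \<xi> k \<le> x} = {k. int k \<le> n}"
    unfolding n_def by (simp add: le_floor_iff)
  have "finite {k. int k \<le> n}"
    by (rule finite_subset[of _ "{..nat n}"]) auto
  then have "distfun M X x = (\<Sum>k | int k \<le> n. distatom M X (\<xi> k))"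
    using distfun_X_eq_sum atoms_below by simp
  also have "\<dots> = (\<Sum>k\<in>{0..n}. p\<^sub>X k)"
    by (rule sum.reindex_bij_witness[of _ nat int]) auto
  finally show ?thesis
    unfolding n_def .
qed

lemma distfun_X_eq_Theta_conv:
  assumes "0 < s" and "\<sigma> \<le> s" and lattice: "\<And>l. \<xi> l = \<xi> 0 + s * real l"
    and pos: "F\<^sub>\<epsilon> (z0 + \<sigma>) > 0"
  defines "\<zeta> \<equiv> \<lambda>l. \<xi> 0 + \<sigma> + s * real l"
  shows "distfun M X x =
    Theta_conv (PY F\<^sub>Y F\<^sub>\<epsilon> \<xi> \<zeta> z0) (sgamma (\<lambda>z. Peps_plus F\<^sub>\<epsilon> \<xi> \<zeta> z0 z z)) ((x - \<xi> 0) / s)"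
proof -
  define P where "P = Peps_plus F\<^sub>\<epsilon> \<xi> \<zeta> z0"
  define g where "g = PY F\<^sub>Y F\<^sub>\<epsilon> \<xi> \<zeta> z0"
  have \<zeta>_le: "\<zeta> l \<le> \<xi> (Suc l)" for l
    unfolding \<zeta>_def using \<open>\<sigma> \<le> s\<close> lattice[of "Suc l"] by (simp add: algebra_simps)
  have pos': "F\<^sub>\<epsilon> (z0 + \<zeta> l - \<xi> l) > 0" for l
    unfolding \<zeta>_def using pos lattice[of l] by simp
  interpret renewal_kernel P
    unfolding P_def using pos' by (intro renewal_kernel_Peps_plus) (metis less_irrefl)
  have P_diag: "P l z = P z z" if "0 \<le> z" "z \<le> l" for l z
    unfolding P_def \<zeta>_def by (rule Peps_plus_lattice[OF lattice that])
  have diag_nonpos: "P z z = 0" if "z \<le> 0" for z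
    using support[of z z] that by fastforce
  have "distfun M X x = (\<Sum>k\<in>{0..\<lfloor>(x - \<xi> 0) / s\<rfloor>}. p\<^sub>X k)"
    by (rule distfun_X_lattice_eq_sum[OF \<open>0 < s\<close> lattice])
  also have "\<dots> = (\<Sum>k\<in>{0..\<lfloor>(x - \<xi> 0) / s\<rfloor>}. \<Sum>z\<in>{0..k}. g (k - z) * dbeta P k z)"
  proof (rule sum.cong[OF refl])
    fix k
    show "p\<^sub>X k = (\<Sum>z\<in>{0..k}. g (k - z) * dbeta P k z)"
    proof (rule renewal_equation_solution[where q="\<lambda>l. p\<^sub>X l"])
      show "p\<^sub>X l = g l + (\<Sum>z\<in>{1..l}. P l z * p\<^sub>X (l - z))" if "0 \<le> l" for l
        unfolding g_def P_def by (rule distatom_renewal_equation[OF \<zeta>_le pos' that])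
    qed simp
  qed
  also have "\<dots> = (\<Sum>k\<in>{0..\<lfloor>(x - \<xi> 0) / s\<rfloor>}. \<Sum>z\<in>{0..k}. g (k - z) * sgamma (\<lambda>z. P z z) z)"
    by (intro sum.cong refl) (simp add: dbeta_eq_sgamma[OF P_diag diag_nonpos])
  also have "\<dots> = Theta_conv g (sgamma (\<lambda>z. P z z)) ((x - \<xi> 0) / s)"
    by (rule Theta_conv_eq_sum[symmetric]) (simp_all add: g_def PY_def sgamma_eq_0_neg)
  finally show ?thesis
    unfolding g_def P_def .
qed

end

theorem corollary3:
  fixes M :: "'a measure" and X \<epsilon> :: "'a \<Rightarrow> real" and \<xi> :: "nat \<Rightarrow> real" and z0 :: real
  assumes "prob_space M"
    and "X \<in> borel_measurable M" and "\<epsilon> \<in> borel_measurable M"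
    and "prob_space.indep_var M borel X borel \<epsilon>"
    and "strict_mono \<xi>"
    and "measure M {\<omega> \<in> space M. X \<omega> \<in> range \<xi>} = 1"
    and "distatom M X (\<xi> 0) > 0"
    and "distfun M \<epsilon> z0 = 0"
  shows
   "(\<forall>\<zeta> :: nat \<Rightarrow> real.
       (\<forall>l. \<xi> l < \<zeta> l \<and> \<zeta> l \<le> \<xi> (Suc l) \<and> distfun M \<epsilon> (z0 + \<zeta> l - \<xi> l) > 0) \<longrightarrow>
       (\<forall>l :: int.
          (if 0 \<le> l then distatom M X (\<xi> (nat l)) else 0) =
          (\<Sum>\<^sub>\<infinity> z \<in> (UNIV::int set).
             PY (distfun M (\<lambda>\<omega>. X \<omega> + \<epsilon> \<omega>)) (distfun M \<epsilon>) \<xi> \<zeta> z0 (l - z) *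
             dbeta (Peps_plus (distfun M \<epsilon>) \<xi> \<zeta> z0) l z)))
    \<and>
    (\<forall>s \<sigma> :: real.
       s > 0 \<and> 0 < \<sigma> \<and> \<sigma> \<le> s \<and> (\<forall>l. \<xi> l = \<xi> 0 + s * real l) \<and> distfun M \<epsilon> (z0 + \<sigma>) > 0 \<longrightarrow>
       (let \<zeta> = (\<lambda>l. \<xi> 0 + \<sigma> + s * real l) in
        \<forall>x :: real.
          distfun M X x =
          Theta_conv (PY (distfun M (\<lambda>\<omega>. X \<omega> + \<epsilon> \<omega>)) (distfun M \<epsilon>) \<xi> \<zeta> z0)
                     (sgamma (\<lambda>z. Peps_plus (distfun M \<epsilon>) \<xi> \<zeta> z0 z z))
                     ((x - \<xi> 0) / s)))"
proof -
  interpret prob_space M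
    by (fact assms(1))
  interpret discrete_signal_plus_noise M X \<epsilon> \<xi> z0
    by unfold_locales (fact assms)+
  have "p\<^sub>X l = (\<Sum>\<^sub>\<infinity>z\<in>(UNIV::int set).
      PY F\<^sub>Y F\<^sub>\<epsilon> \<xi> \<zeta> z0 (l - z) * dbeta (Peps_plus F\<^sub>\<epsilon> \<xi> \<zeta> z0) l z)"
    if "\<forall>l. \<xi> l < \<zeta> l \<and> \<zeta> l \<le> \<xi> (Suc l) \<and> F\<^sub>\<epsilon> (z0 + \<zeta> l - \<xi> l) > 0" for \<zeta> l
    using that by (intro distatom_eq_infsum_PY_dbeta) auto
  moreover have "distfun M X x = Theta_conv (PY F\<^sub>Y F\<^sub>\<epsilon> \<xi> (\<lambda>l. \<xi> 0 + \<sigma> + s * real l) z0)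
      (sgamma (\<lambda>z. Peps_plus F\<^sub>\<epsilon> \<xi> (\<lambda>l. \<xi> 0 + \<sigma> + s * real l) z0 z z)) ((x - \<xi> 0) / s)"
    if "s > 0 \<and> 0 < \<sigma> \<and> \<sigma> \<le> s \<and> (\<forall>l. \<xi> l = \<xi> 0 + s * real l) \<and> F\<^sub>\<epsilon> (z0 + \<sigma>) > 0"
    for s \<sigma> x
    by (intro distfun_X_eq_Theta_conv) (use that in blast)+
  ultimately show ?thesis
    unfolding Let_def by blast
qed

end
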